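(* Let $\Phi=(A;\{E_i\}_{i=0}^d;A^*;\{E^*_i\}_{i=0}^d)$ be a tridiagonal system on $V$ with $d\ge1$, such that $(A,A^* )$ satisfies the $q$-Serre relations, with $E_iV$ the eigenspace of $A$ for $\theta_i=q^{2i-d}$ and $E^*_iV$ the eigenspace of $A^*$ for $\theta^*_i=q^{d-2i}$. Let $\{U_i\}_{i=0}^d$ be its split decomposition, $K:V\to V$ the linear map acting on $U_i$ as $q^{d-2i}I$, $t$ a scalar, and $B^*=tA^*+(1-t)K$. Then $B^*$ is diagonalizable with eigenvalues $\theta^*_0,\dots,\theta^*_d$, and for $0\le i\le d$ the $\theta^*_i$-eigenspace of $B^*$ has dimension $\dim U_i$.
   Context: $\mathcal K$ is an algebraically closed field; $V$ is a nonzero finite-dimensional vector space over $\mathcal K$; $q\in\mathcal K$ is nonzero and not a root of unity; $[3]_q=q^2+1+q^{-2}$. The $q$-Serre relations for $(X,Y)$: $X^3Y-[3]_qX^2YX+[3]_qXYX^2-YX^3=0$ and $Y^3X-[3]_qY^2XY+[3]_qYXY^2-XY^3=0$. Primitive idempotent of a diagonalizable $X$ for eigenvalue $\lambda_i$: $\prod_{j\ne i}\frac{X-\lambda_jI}{\lambda_i-\lambda_j}$. A tridiagonal system on $V$ is a sequence $(A;\{E_i\}_{i=0}^d;A^*;\{E^*_i\}_{i=0}^d)$ with $A,A^*$ diagonalizable, $\{E_i\}$, $\{E^*_i\}$ orderings of their primitive idempotents, $E_iA^*E_j=0$ and $E^*_iAE^*_j=0$ when $|i-j|>1$, and no subspaces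 other than $0,V$ invariant under both $A$ and $A^*$. Split decomposition: $U_i=(E^*_0V+\cdots+E^*_iV)\cap(E_iV+\cdots+E_dV)$; known: $V=U_0\oplus\cdots\oplus U_d$ with each $U_i\ne0$, $(A-\theta_iI)U_i\subseteq U_{i+1}$, $(A^*-\theta^*_iI)U_i\subseteq U_{i-1}$ ($U_{-1}=U_{d+1}=0$). *)

theory Defs
  imports "HOL-Computational_Algebra.Polynomial"
begin

text \<open>The vector space V is modelled as the whole carrier type 'v, with scalar
multiplication s over the field 'a (HOL's vector_space locale).\<close>

definition eigenvalues_of :: "('a::field \<Rightarrow> 'v::ab_group_add \<Rightarrow> 'v) \<Rightarrow> ('v \<Rightarrow> 'v) \<Rightarrow> 'a set" where
  "eigenvalues_of s X = {c. \<exists>v. v \<noteq> 0 \<and> X v = s c v}"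

definition eigenspace_of :: "('a::field \<Rightarrow> 'v::ab_group_add \<Rightarrow> 'v) \<Rightarrow> ('v \<Rightarrow> 'v) \<Rightarrow> 'a \<Rightarrow> 'v set" where
  "eigenspace_of s X c = {v. X v = s c v}"

definition diagonalizable_op :: "('a::field \<Rightarrow> 'v::ab_group_add \<Rightarrow> 'v) \<Rightarrow> ('v \<Rightarrow> 'v) \<Rightarrow> bool" where
  "diagonalizable_op s X \<longleftrightarrow>
     Vector_Spaces.linear s s X \<and> module.span s {v. \<exists>c. X v = s c v} = UNIV"

definition prim_idem ::
  "('a::field \<Rightarrow> 'v::ab_group_add \<Rightarrow> 'v) \<Rightarrow> ('v \<Rightarrow> 'v) \<Rightarrow> (nat \<Rightarrow> 'a) \<Rightarrow> nat \<Rightarrow> nat \<Rightarrow> ('v \<Rightarrow> 'v)" where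
  "prim_idem s X th d i =
     foldr (\<lambda>j F. (\<lambda>v. s (inverse (th i - th j)) (X v - s (th j) v)) \<circ> F)
           (filter (\<lambda>j. j \<noteq> i) [0..<Suc d]) id"

definition tridiagonal_system ::
  "('a::field \<Rightarrow> 'v::ab_group_add \<Rightarrow> 'v) \<Rightarrow> nat \<Rightarrow> ('v \<Rightarrow> 'v) \<Rightarrow> (nat \<Rightarrow> 'v \<Rightarrow> 'v) \<Rightarrow> (nat \<Rightarrow> 'a)
    \<Rightarrow> ('v \<Rightarrow> 'v) \<Rightarrow> (nat \<Rightarrow> 'v \<Rightarrow> 'v) \<Rightarrow> (nat \<Rightarrow> 'a) \<Rightarrow> bool" where
  "tridiagonal_system s d A E th As Es ths \<longleftrightarrow>
     diagonalizable_op s A \<and> diagonalizable_op s As \<and>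
     inj_on th {0..d} \<and> eigenvalues_of s A = th ` {0..d} \<and>
     inj_on ths {0..d} \<and> eigenvalues_of s As = ths ` {0..d} \<and>
     (\<forall>i\<le>d. E i = prim_idem s A th d i) \<and>
     (\<forall>i\<le>d. Es i = prim_idem s As ths d i) \<and>
     (\<forall>i\<le>d. \<forall>j\<le>d. (i > j + 1 \<or> j > i + 1) \<longrightarrow>
        E i \<circ> As \<circ> E j = (\<lambda>v. 0) \<and> Es i \<circ> A \<circ> Es j = (\<lambda>v. 0)) \<and>
     (\<forall>W. module.subspace s W \<and> A ` W \<subseteq> W \<and> As ` W \<subseteq> W \<longrightarrow> W = {0} \<or> W = UNIV)"

definition q_serre :: "('a::field \<Rightarrow> 'v::ab_group_add \<Rightarrow> 'v) \<Rightarrow> 'a \<Rightarrow> ('v \<Rightarrow> 'v) \<Rightarrow> ('v \<Rightarrow> 'v) \<Rightarrow> bool" where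
  "q_serre s q X Y \<longleftrightarrow>
     (let c = q powi 2 + 1 + q powi (-2) in
      (\<forall>v. X (X (X (Y v))) - s c (X (X (Y (X v)))) + s c (X (Y (X (X v)))) - Y (X (X (X v))) = 0) \<and>
      (\<forall>v. Y (Y (Y (X v))) - s c (Y (Y (X (Y v)))) + s c (Y (X (Y (Y v)))) - X (Y (Y (Y v))) = 0))"

definition split_component ::
  "('a::field \<Rightarrow> 'v::ab_group_add \<Rightarrow> 'v) \<Rightarrow> nat \<Rightarrow> (nat \<Rightarrow> 'v \<Rightarrow> 'v) \<Rightarrow> (nat \<Rightarrow> 'v \<Rightarrow> 'v) \<Rightarrow> nat \<Rightarrow> 'v set" where
  "split_component s d E Es i =
     module.span s (\<Union>h\<in>{0..i}. range (Es h)) \<inter> module.span s (\<Union>h\<in>{i..d}. range (E h))"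

end

theory Submission
  imports Defs
begin

(*
  On the split decomposition, A* - th*_i I maps U_i into U_(i-1) while K acts on U_i as th*_i,
  so on U_i the map B* - th*_i I agrees with t (A* - th*_i I).  Hence for t ~= 0 the operator D
  acting on U_i as t^-i satisfies B* D = D A*: B* is similar to A*.  For t = 0, B* = K is diagonal
  with eigenspaces U_i.  It remains to show dim U_i = dim E*_i V.  The U_i span V, because their
  span is invariant under A and A*, and their sum is direct, because they are eigenspaces of K.
  Since V = (E*_0 V + ... + E*_(i-1) V) + (E_i V + ... + E_d V), and dually, the partial sums of
  dim E_h V and of dim E*_h V agree; as U_i = (E*_0 V + ... + E*_i V) \<inter> (E_i V + ... + E_d V),
  the dimension formula for sums and intersections then gives dim U_i >= dim E*_i V, with equality
  since both sides sum to dim V over i.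
*)

section \<open>Eigenspaces and primitive idempotents\<close>

definition eigen_rescale ::
  "('a::field \<Rightarrow> 'v::ab_group_add \<Rightarrow> 'v) \<Rightarrow> ('v \<Rightarrow> 'v) \<Rightarrow> (nat \<Rightarrow> 'a) \<Rightarrow> nat \<Rightarrow> (nat \<Rightarrow> 'a) \<Rightarrow> 'v \<Rightarrow> 'v"
  where "eigen_rescale s X th d g v = (\<Sum>i\<in>{0..d}. s (g i) (prim_idem s X th d i v))"

context vector_space
begin

interpretation endo: vector_space_pair scale scale ..

lemma linear_minus_scale:
  "Vector_Spaces.linear scale scale X \<Longrightarrow> Vector_Spaces.linear scale scale (\<lambda>v. X v - c *s v)"
  by (intro endo.linear_compose_sub endo.linear_compose_scale_right linear_ident)

lemma subspace_eigenspace_of: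
  "Vector_Spaces.linear scale scale X \<Longrightarrow> subspace (eigenspace_of scale X c)"
  using endo.linear_subspace_kernel[OF linear_minus_scale, of X c]
  by (simp add: eigenspace_of_def)

lemma linear_span_into_subspace:
  assumes "Vector_Spaces.linear scale scale X" "X ` S \<subseteq> T" "subspace T" "x \<in> span S"
  shows "X x \<in> T"
  using endo.linear_span_image[OF assms(1), of S] span_minimal[OF assms(2,3)] assms(4) by blast

lemma span_invariant_if_shifts_in_span:
  assumes "Vector_Spaces.linear scale scale X"
    and "\<And>j u. j \<in> I \<Longrightarrow> u \<in> W j \<Longrightarrow> X u - c j *s u \<in> span (\<Union>j\<in>I. W j)"
  shows "X ` span (\<Union>j\<in>I. W j) \<subseteq> span (\<Union>j\<in>I. W j)"
proof -
  have "X u \<in> span (\<Union>j\<in>I. W j)" if "j \<in> I" "u \<in> W j" for j u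
  proof -
    have "u \<in> span (\<Union>j\<in>I. W j)"
      using that by (auto intro: span_base)
    with that assms(2) have "(X u - c j *s u) + c j *s u \<in> span (\<Union>j\<in>I. W j)"
      by (intro span_add span_scale)
    then show ?thesis
      by simp
  qed
  then have "X ` (\<Union>j\<in>I. W j) \<subseteq> span (\<Union>j\<in>I. W j)"
    by blast
  then show ?thesis
    using linear_span_into_subspace[OF assms(1) _ subspace_span] by blast
qed

lemma linear_foldr_scaled_shifts:
  assumes "Vector_Spaces.linear scale scale X"
  shows "Vector_Spaces.linear scale scale
           (foldr (\<lambda>j F. (\<lambda>v. a j *s (X v - b j *s v)) \<circ> F) L id)"
proof (induction L)
  case Nil
  show ?case by (simp add: linear_ident)
next
  case (Cons j L)
  have "Vector_Spaces.linear scale scale (\<lambda>v. a j *s (X v - b j *s v))"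
    using linear_minus_scale[OF assms] by (rule endo.linear_compose_scale_right)
  from Vector_Spaces.linear_compose[OF Cons.IH this] show ?case
    by (simp add: comp_def)
qed

lemma foldr_scaled_shifts_eigenvector:
  assumes "Vector_Spaces.linear scale scale X" "X v = c *s v"
  shows "foldr (\<lambda>j F. (\<lambda>v. a j *s (X v - b j *s v)) \<circ> F) L id v
           = (\<Prod>j\<leftarrow>L. a j * (c - b j)) *s v"
proof (induction L)
  case (Cons j L)
  interpret X: Vector_Spaces.linear scale scale X by fact
  let ?p = "\<Prod>j\<leftarrow>L. a j * (c - b j)"
  have "X (?p *s v) = c *s (?p *s v)"
    using assms(2) by (simp add: X.scale mult.commute)
  then have "X (?p *s v) - b j *s (?p *s v) = (c - b j) *s (?p *s v)"
    by (simp only: scale_left_diff_distrib)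
  with Cons.IH show ?case
    by (simp add: mult.assoc)
qed simp

lemma linear_prim_idem:
  "Vector_Spaces.linear scale scale X \<Longrightarrow> Vector_Spaces.linear scale scale (prim_idem scale X th d i)"
  unfolding prim_idem_def by (rule linear_foldr_scaled_shifts)

lemma prim_idem_eigenvector:
  assumes "Vector_Spaces.linear scale scale X" "X v = c *s v"
  shows "prim_idem scale X th d i v
           = (\<Prod>j\<in>{0..d} - {i}. inverse (th i - th j) * (c - th j)) *s v"
proof -
  let ?L = "filter (\<lambda>j. j \<noteq> i) [0..<Suc d]"
  have distinct: "distinct ?L" by simp
  have set: "set ?L = {0..d} - {i}" by auto
  show ?thesis
    unfolding prim_idem_def set[symmetric] prod.distinct_set_conv_list[OF distinct]
    by (rule foldr_scaled_shifts_eigenvector[OF assms])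
qed

lemma prim_idem_eigenvector_delta:
  assumes "Vector_Spaces.linear scale scale X" "inj_on th {0..d}"
    and "i \<le> d" "j \<le> d" "X v = th j *s v"
  shows "prim_idem scale X th d i v = (if i = j then v else 0)"
proof (cases "i = j")
  case True
  have "th i \<noteq> th k" if "k \<in> {0..d} - {i}" for k
    using that assms(2,3) by (auto dest: inj_onD)
  then show ?thesis
    using True prim_idem_eigenvector[OF assms(1,5), of th d i] by (simp add: prod.neutral)
next
  case False
  then have "(\<Prod>k\<in>{0..d} - {i}. inverse (th i - th k) * (th j - th k)) = 0"
    using assms(4) by (intro prod_zero) auto
  then show ?thesis
    using False prim_idem_eigenvector[OF assms(1,5), of th d i] by simp
qed

lemma linear_eigen_rescale:
  assumes "Vector_Spaces.linear scale scale X"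
  shows "Vector_Spaces.linear scale scale (eigen_rescale scale X th d g)"
proof -
  have "Vector_Spaces.linear scale scale (\<lambda>v. g i *s prim_idem scale X th d i v)" for i
    using linear_prim_idem[OF assms] by (rule endo.linear_compose_scale_right)
  then show ?thesis
    unfolding eigen_rescale_def by (simp add: endo.linear_compose_sum)
qed

lemma eigen_rescale_eigenvector:
  assumes "Vector_Spaces.linear scale scale X" "inj_on th {0..d}" "j \<le> d" "X v = th j *s v"
  shows "eigen_rescale scale X th d g v = g j *s v"
proof -
  have "eigen_rescale scale X th d g v = (\<Sum>i\<in>{0..d}. if i = j then g j *s v else 0)"
    unfolding eigen_rescale_def
    using prim_idem_eigenvector_delta[OF assms(1,2) _ assms(3,4)] by (intro sum.cong) auto
  with assms(3) show ?thesis by simp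
qed

lemma span_eigenspaces_eq_UNIV:
  assumes "diagonalizable_op scale X" "eigenvalues_of scale X = th ` I"
  shows "span (\<Union>j\<in>I. eigenspace_of scale X (th j)) = UNIV"
proof -
  have "{v. \<exists>c. X v = c *s v} \<subseteq> span (\<Union>j\<in>I. eigenspace_of scale X (th j))"
  proof
    fix v assume "v \<in> {v. \<exists>c. X v = c *s v}"
    then obtain c where c: "X v = c *s v" by blast
    show "v \<in> span (\<Union>j\<in>I. eigenspace_of scale X (th j))"
    proof (cases "v = 0")
      case False
      with c assms(2) obtain j where "j \<in> I" "c = th j"
        by (auto simp: eigenvalues_of_def)
      with c show ?thesis by (auto simp: eigenspace_of_def intro!: span_base)
    qed (simp add: span_zero)
  qed
  then have "span {v. \<exists>c. X v = c *s v} \<subseteq> span (\<Union>j\<in>I. eigenspace_of scale X (th j))"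
    by (rule span_minimal[OF _ subspace_span])
  with assms(1) show ?thesis
    unfolding diagonalizable_op_def by auto
qed

context
  fixes X :: "'b \<Rightarrow> 'b" and th :: "nat \<Rightarrow> 'a" and d :: nat
  assumes diag: "diagonalizable_op scale X"
    and eigenvalues: "eigenvalues_of scale X = th ` {0..d}"
    and inj: "inj_on th {0..d}"
begin

lemma range_prim_idem:
  assumes "i \<le> d"
  shows "range (prim_idem scale X th d i) = eigenspace_of scale X (th i)"
proof
  have lin: "Vector_Spaces.linear scale scale X"
    using diag by (simp add: diagonalizable_op_def)
  have "prim_idem scale X th d i ` (\<Union>j\<in>{0..d}. eigenspace_of scale X (th j))
          \<subseteq> eigenspace_of scale X (th i)"
  proof clarify
    fix j u assume "j \<in> {0..d}" and u: "u \<in> eigenspace_of scale X (th j)"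
    then have "prim_idem scale X th d i u = (if i = j then u else 0)"
      using prim_idem_eigenvector_delta[OF lin inj assms] by (simp add: eigenspace_of_def)
    with u show "prim_idem scale X th d i u \<in> eigenspace_of scale X (th i)"
      using subspace_0[OF subspace_eigenspace_of[OF lin]] by auto
  qed
  from linear_span_into_subspace[OF linear_prim_idem[OF lin] this subspace_eigenspace_of[OF lin]]
  show "range (prim_idem scale X th d i) \<subseteq> eigenspace_of scale X (th i)"
    using span_eigenspaces_eq_UNIV[OF diag eigenvalues] by auto
  show "eigenspace_of scale X (th i) \<subseteq> range (prim_idem scale X th d i)"
  proof
    fix v assume "v \<in> eigenspace_of scale X (th i)"
    then have "prim_idem scale X th d i v = v"
      using prim_idem_eigenvector_delta[OF lin inj assms assms] by (simp add: eigenspace_of_def)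
    then show "v \<in> range (prim_idem scale X th d i)"
      by (metis rangeI)
  qed
qed

lemma sum_prim_idem: "(\<Sum>i\<in>{0..d}. prim_idem scale X th d i v) = v"
proof -
  have lin: "Vector_Spaces.linear scale scale X"
    using diag by (simp add: diagonalizable_op_def)
  have "Vector_Spaces.linear scale scale (\<lambda>v. \<Sum>i\<in>{0..d}. prim_idem scale X th d i v)"
    using linear_prim_idem[OF lin] by (simp add: endo.linear_compose_sum)
  moreover have "v \<in> span (\<Union>j\<in>{0..d}. eigenspace_of scale X (th j))"
    using span_eigenspaces_eq_UNIV[OF diag eigenvalues] by simp
  moreover have "(\<Sum>i\<in>{0..d}. prim_idem scale X th d i u) = u"
    if "u \<in> (\<Union>j\<in>{0..d}. eigenspace_of scale X (th j))" for u
  proof -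
    from that obtain j where j: "j \<le> d" "X u = th j *s u"
      by (auto simp: eigenspace_of_def)
    then have "(\<Sum>i\<in>{0..d}. prim_idem scale X th d i u) = (\<Sum>i\<in>{0..d}. if i = j then u else 0)"
      using prim_idem_eigenvector_delta[OF lin inj] by (intro sum.cong) auto
    with j show ?thesis by simp
  qed
  ultimately show ?thesis
    using endo.linear_eq_on[OF _ linear_ident] by blast
qed

end

lemma eigenvector_in_span_other_eigenspaces_eq_0:
  assumes lin: "Vector_Spaces.linear scale scale X" and "finite I"
    and "x \<in> span (\<Union>j\<in>I. eigenspace_of scale X (f j))" "X x = c *s x" "c \<notin> f ` I"
  shows "x = 0"
  using assms(2-)
proof (induction I arbitrary: x rule: finite_induct)
  case (insert k I)
  interpret X: Vector_Spaces.linear scale scale X by fact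
  let ?E = "eigenspace_of scale X (f k)" and ?S = "span (\<Union>j\<in>I. eigenspace_of scale X (f j))"
  have "x \<in> span (?E \<union> (\<Union>j\<in>I. eigenspace_of scale X (f j)))"
    using insert.prems(1) by simp
  moreover have "span ?E = ?E"
    using subspace_eigenspace_of[OF lin] by simp
  ultimately obtain y z where x: "x = y + z" and y: "y \<in> ?E" and z: "z \<in> ?S"
    unfolding span_Un by blast
  have "X ` (\<Union>j\<in>I. eigenspace_of scale X (f j)) \<subseteq> ?S"
    by (auto simp: eigenspace_of_def X.scale intro!: span_base)
  from linear_span_into_subspace[OF lin this subspace_span z]
  have w: "X z - f k *s z \<in> ?S"
    using z by (intro span_diff span_scale)
  have "X y = f k *s y"
    using y by (simp add: eigenspace_of_def)
  with insert.prems(2) have "X z = c *s x - f k *s y"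
    unfolding x X.add by (metis add_diff_cancel_left')
  then have "X z - f k *s z = (c - f k) *s x"
    unfolding x by (simp add: algebra_simps)
  have "(c - f k) *s x = 0"
  proof (rule insert.IH)
    show "(c - f k) *s x \<in> ?S"
      using w \<open>X z - f k *s z = (c - f k) *s x\<close> by simp
    show "X ((c - f k) *s x) = c *s ((c - f k) *s x)"
      using insert.prems(2) by (simp add: X.scale)
    show "c \<notin> f ` I"
      using insert.prems(3) by simp
  qed
  with insert.prems(3) show ?case by simp
qed simp

end

context finite_dimensional_vector_space
begin

lemma dim_span_Un_le:
  assumes "subspace S" "subspace T"
  shows "dim (span (S \<union> T)) \<le> dim S + dim T"
proof -
  from assms have "span S = S" "span T = T"
    by simp_all
  then have "span (S \<union> T) = {x + y |x y. x \<in> S \<and> y \<in> T}"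
    by (simp only: span_Un)
  then show ?thesis
    using dim_sums_Int[OF assms] by simp
qed

lemma dim_span_eigenspaces:
  assumes lin: "Vector_Spaces.linear scale scale X" and "finite I" "inj_on f I"
  shows "dim (span (\<Union>j\<in>I. eigenspace_of scale X (f j))) = (\<Sum>j\<in>I. dim (eigenspace_of scale X (f j)))"
  using assms(2,3)
proof (induction I rule: finite_induct)
  case (insert k I)
  let ?E = "eigenspace_of scale X (f k)" and ?S = "span (\<Union>j\<in>I. eigenspace_of scale X (f j))"
  have span_E: "span ?E = ?E"
    using subspace_eigenspace_of[OF lin] by simp
  have "span (\<Union>j\<in>insert k I. eigenspace_of scale X (f j))
          = span (?E \<union> (\<Union>j\<in>I. eigenspace_of scale X (f j)))"
    by simp
  also have "\<dots> = {x + y |x y. x \<in> ?E \<and> y \<in> ?S}"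
    unfolding span_Un span_E ..
  moreover have "?E \<inter> ?S = {0}"
  proof -
    have "f k \<notin> f ` I"
      using insert by auto
    then have "x = 0" if "x \<in> ?E" "x \<in> ?S" for x
      using eigenvector_in_span_other_eigenspaces_eq_0[OF lin insert.hyps(1) that(2), of "f k"] that(1)
      by (simp add: eigenspace_of_def)
    then show ?thesis
      using subspace_0[OF subspace_eigenspace_of[OF lin]] span_zero by blast
  qed
  ultimately have "dim (span (\<Union>j\<in>insert k I. eigenspace_of scale X (f j))) = dim ?E + dim ?S"
    using dim_sums_Int[OF subspace_eigenspace_of[OF lin, of "f k"] subspace_span[of "\<Union>j\<in>I. eigenspace_of scale X (f j)"]]
    by simp
  with insert show ?case by simp
qed simp

end

section \<open>Operators acting as scalars on spanning subspaces\<close>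

context vector_space
begin

lemma diagonalizable_op_if_spanning_eigenvectors:
  assumes "Vector_Spaces.linear scale scale X" "span S = UNIV" "\<And>v. v \<in> S \<Longrightarrow> \<exists>c. X v = c *s v"
  shows "diagonalizable_op scale X"
proof -
  have "span S \<subseteq> span {v. \<exists>c. X v = c *s v}"
    using assms(3) by (intro span_mono) auto
  with assms(1,2) show ?thesis
    unfolding diagonalizable_op_def by auto
qed

context
  fixes X :: "'b \<Rightarrow> 'b" and W :: "nat \<Rightarrow> 'b set" and c :: "nat \<Rightarrow> 'a" and I :: "nat set"
  assumes lin: "Vector_Spaces.linear scale scale X" and fin: "finite I"
    and subspace: "\<And>j. j \<in> I \<Longrightarrow> subspace (W j)"
    and spanning: "span (\<Union>j\<in>I. W j) = UNIV"
    and scalar: "\<And>j v. j \<in> I \<Longrightarrow> v \<in> W j \<Longrightarrow> X v = c j *s v"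
    and inj: "inj_on c I"
begin

lemma scalar_block_le_eigenspace_of: "j \<in> I \<Longrightarrow> W j \<subseteq> eigenspace_of scale X (c j)"
  using scalar by (auto simp: eigenspace_of_def)

lemma scalar_blocks_eigenspace_of:
  assumes i: "i \<in> I"
  shows "eigenspace_of scale X (c i) = W i"
proof
  show "eigenspace_of scale X (c i) \<subseteq> W i"
  proof
    fix x assume x: "x \<in> eigenspace_of scale X (c i)"
    have "(\<Union>j\<in>I. W j) = W i \<union> (\<Union>j\<in>I - {i}. W j)"
      using i by blast
    with spanning have "x \<in> span (W i \<union> (\<Union>j\<in>I - {i}. W j))"
      by simp
    moreover have "span (W i) = W i"
      using subspace[OF i] by simp
    ultimately obtain y z where xyz: "x = y + z" and y: "y \<in> W i"
      and z: "z \<in> span (\<Union>j\<in>I - {i}. W j)"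
      unfolding span_Un by blast
    have "(\<Union>j\<in>I - {i}. W j) \<subseteq> (\<Union>j\<in>I - {i}. eigenspace_of scale X (c j))"
      using scalar_block_le_eigenspace_of by blast
    with z have z_span: "z \<in> span (\<Union>j\<in>I - {i}. eigenspace_of scale X (c j))"
      using span_mono by blast
    have "z \<in> eigenspace_of scale X (c i)"
      using subspace_diff[OF subspace_eigenspace_of[OF lin] x scalar_block_le_eigenspace_of[OF i, THEN subsetD, OF y]]
      by (simp add: xyz)
    then have z_eigen: "X z = c i *s z"
      by (simp add: eigenspace_of_def)
    have "c i \<notin> c ` (I - {i})"
      using inj i by (auto dest: inj_onD)
    with z_span z_eigen have "z = 0"
      by (intro eigenvector_in_span_other_eigenspaces_eq_0[OF lin finite_Diff[OF fin]])
    with xyz y show "x \<in> W i" by simp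
  qed
  show "W i \<subseteq> eigenspace_of scale X (c i)"
    using i by (rule scalar_block_le_eigenspace_of)
qed

lemma scalar_blocks_diagonalizable_op: "diagonalizable_op scale X"
  using scalar by (intro diagonalizable_op_if_spanning_eigenvectors[OF lin spanning]) blast

lemma scalar_blocks_eigenvalues_of:
  assumes "\<And>j. j \<in> I \<Longrightarrow> W j \<noteq> {0}"
  shows "eigenvalues_of scale X = c ` I"
proof
  show "eigenvalues_of scale X \<subseteq> c ` I"
  proof
    fix a assume "a \<in> eigenvalues_of scale X"
    then obtain v where v: "v \<noteq> 0" "X v = a *s v"
      by (auto simp: eigenvalues_of_def)
    have "(\<Union>j\<in>I. W j) \<subseteq> (\<Union>j\<in>I. eigenspace_of scale X (c j))"
      using scalar_block_le_eigenspace_of by blast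
    then have "v \<in> span (\<Union>j\<in>I. eigenspace_of scale X (c j))"
      using spanning span_mono by blast
    with v show "a \<in> c ` I"
      using eigenvector_in_span_other_eigenspaces_eq_0[OF lin fin] by blast
  qed
  show "c ` I \<subseteq> eigenvalues_of scale X"
  proof clarify
    fix j assume j: "j \<in> I"
    then obtain v where "v \<in> W j" "v \<noteq> 0"
      using assms subspace_0[OF subspace] by blast
    with j show "c j \<in> eigenvalues_of scale X"
      using scalar by (auto simp: eigenvalues_of_def)
  qed
qed

end

section \<open>Intertwined operators\<close>

context
  fixes X B D :: "'b \<Rightarrow> 'b"
  assumes lin_B: "Vector_Spaces.linear scale scale B"
    and lin_D: "Vector_Spaces.linear scale scale D"
    and bij_D: "bij D"
    and intertwines: "\<And>v. B (D v) = D (X v)"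
begin

interpretation D: Vector_Spaces.linear scale scale D by (rule lin_D)

lemma intertwined_eigenspace_of: "eigenspace_of scale B c = D ` eigenspace_of scale X c"
proof
  show "D ` eigenspace_of scale X c \<subseteq> eigenspace_of scale B c"
    by (auto simp: eigenspace_of_def intertwines D.scale)
  show "eigenspace_of scale B c \<subseteq> D ` eigenspace_of scale X c"
  proof
    fix y assume y: "y \<in> eigenspace_of scale B c"
    obtain x where x: "y = D x"
      using bij_D by (metis bij_pointE)
    have "D (X x) = D (c *s x)"
      using y by (simp add: eigenspace_of_def x intertwines[symmetric] D.scale)
    then have "X x = c *s x"
      using bij_D by (simp add: bij_def inj_eq)
    with x show "y \<in> D ` eigenspace_of scale X c"
      by (simp add: eigenspace_of_def)
  qed
qed

lemma intertwined_eigenvalues_of: "eigenvalues_of scale B = eigenvalues_of scale X"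
proof -
  have "D x \<noteq> 0 \<longleftrightarrow> x \<noteq> 0" for x
    using bij_D D.zero by (metis bij_def inj_eq)
  then have "(\<exists>v. v \<noteq> 0 \<and> v \<in> eigenspace_of scale B c) \<longleftrightarrow> (\<exists>v. v \<noteq> 0 \<and> v \<in> eigenspace_of scale X c)" for c
    unfolding intertwined_eigenspace_of by blast
  then show ?thesis
    by (auto simp: eigenvalues_of_def eigenspace_of_def)
qed

lemma intertwined_diagonalizable_op:
  assumes "diagonalizable_op scale X"
  shows "diagonalizable_op scale B"
proof (rule diagonalizable_op_if_spanning_eigenvectors[OF lin_B])
  have "span (D ` {v. \<exists>c. X v = c *s v}) = D ` UNIV"
    using assms by (simp add: D.span_image diagonalizable_op_def)
  then show "span (D ` {v. \<exists>c. X v = c *s v}) = UNIV"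
    using bij_D by (simp add: bij_def)
  show "\<exists>c. B v = c *s v" if "v \<in> D ` {v. \<exists>c. X v = c *s v}" for v
    using that by (auto simp: intertwines D.scale)
qed

end

end

section \<open>Tridiagonal systems and the split decomposition\<close>

definition span_ranges :: "('a::field \<Rightarrow> 'v::ab_group_add \<Rightarrow> 'v) \<Rightarrow> (nat \<Rightarrow> 'v \<Rightarrow> 'v) \<Rightarrow> nat set \<Rightarrow> 'v set"
  where "span_ranges s F I = module.span s (\<Union>h\<in>I. range (F h))"

lemma split_component_eq_span_ranges:
  "split_component s d E Es i = span_ranges s Es {0..i} \<inter> span_ranges s E {i..d}"
  by (simp add: split_component_def span_ranges_def)

context vector_space
begin

lemma subspace_span_ranges: "subspace (span_ranges scale F I)"
  by (simp add: span_ranges_def)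

lemma span_ranges_mono: "I \<subseteq> J \<Longrightarrow> span_ranges scale F I \<subseteq> span_ranges scale F J"
  unfolding span_ranges_def by (intro span_mono) auto

end

locale tridiagonal_system_space = finite_dimensional_vector_space scale Basis
  for scale :: "'a::field \<Rightarrow> 'v::ab_group_add \<Rightarrow> 'v" (infixr \<open>*s\<close> 75) and Basis :: "'v set" +
  fixes d :: nat and A :: "'v \<Rightarrow> 'v" and E :: "nat \<Rightarrow> 'v \<Rightarrow> 'v" and th :: "nat \<Rightarrow> 'a"
    and As :: "'v \<Rightarrow> 'v" and Es :: "nat \<Rightarrow> 'v \<Rightarrow> 'v" and ths :: "nat \<Rightarrow> 'a"
  assumes tridiagonal: "tridiagonal_system scale d A E th As Es ths"
begin

lemma dual: "tridiagonal_system_space scale Basis d As Es ths A E th"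
proof unfold_locales
  show "tridiagonal_system scale d As Es ths A E th"
    using tridiagonal unfolding tridiagonal_system_def by (elim conjE, intro conjI) blast+
qed

lemma diagonalizable_A: "diagonalizable_op scale A"
  using tridiagonal by (simp add: tridiagonal_system_def)

lemma linear_A: "Vector_Spaces.linear scale scale A"
  using diagonalizable_A by (simp add: diagonalizable_op_def)

lemma eigenvalues_A: "eigenvalues_of scale A = th ` {0..d}"
  using tridiagonal by (simp add: tridiagonal_system_def)

lemma inj_th: "inj_on th {0..d}"
  using tridiagonal by (simp add: tridiagonal_system_def)

lemma E_eq_prim_idem: "i \<le> d \<Longrightarrow> E i = prim_idem scale A th d i"
  using tridiagonal by (simp add: tridiagonal_system_def)

lemma Es_A_Es_eq_0:
  assumes "i \<le> d" "j \<le> d" "j + 1 < i \<or> i + 1 < j"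
  shows "Es i (A (Es j v)) = 0"
proof -
  have "\<forall>i\<le>d. \<forall>j\<le>d. j + 1 < i \<or> i + 1 < j \<longrightarrow>
          E i \<circ> As \<circ> E j = (\<lambda>v. 0) \<and> Es i \<circ> A \<circ> Es j = (\<lambda>v. 0)"
    using tridiagonal unfolding tridiagonal_system_def by (elim conjE) assumption
  then have "Es i \<circ> A \<circ> Es j = (\<lambda>v. 0)"
    using assms by blast
  then show ?thesis
    by (simp add: fun_eq_iff)
qed

lemma irreducible:
  "subspace W \<Longrightarrow> A ` W \<subseteq> W \<Longrightarrow> As ` W \<subseteq> W \<Longrightarrow> W = {0} \<or> W = UNIV"
  using tridiagonal by (simp add: tridiagonal_system_def)

lemmas diagonalizable_As = tridiagonal_system_space.diagonalizable_A[OF dual]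
  and linear_As = tridiagonal_system_space.linear_A[OF dual]
  and eigenvalues_As = tridiagonal_system_space.eigenvalues_A[OF dual]
  and inj_ths = tridiagonal_system_space.inj_th[OF dual]

lemma range_E: "i \<le> d \<Longrightarrow> range (E i) = eigenspace_of scale A (th i)"
  using range_prim_idem[OF diagonalizable_A eigenvalues_A inj_th] by (simp add: E_eq_prim_idem)

lemma sum_E: "(\<Sum>i\<in>{0..d}. E i v) = v"
  using sum_prim_idem[OF diagonalizable_A eigenvalues_A inj_th] by (simp add: E_eq_prim_idem)

lemma span_ranges_E:
  assumes "I \<subseteq> {0..d}"
  shows "span_ranges scale E I = span (\<Union>h\<in>I. eigenspace_of scale A (th h))"
proof -
  have "range (E h) = eigenspace_of scale A (th h)" if "h \<in> I" for h
  proof -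
    have "h \<le> d"
      using that assms by auto
    then show ?thesis
      by (rule range_E)
  qed
  then show ?thesis
    by (simp add: span_ranges_def)
qed

lemma span_ranges_E_UNIV: "span_ranges scale E {0..d} = UNIV"
  using span_eigenspaces_eq_UNIV[OF diagonalizable_A eigenvalues_A] by (simp add: span_ranges_E)

lemma dim_span_ranges_E:
  "I \<subseteq> {0..d} \<Longrightarrow> dim (span_ranges scale E I) = (\<Sum>h\<in>I. dim (eigenspace_of scale A (th h)))"
  using dim_span_eigenspaces[OF linear_A finite_subset[of _ "{0..d}"] inj_on_subset[OF inj_th]]
  by (simp add: span_ranges_E)

lemma dim_UNIV_eq_sum: "dim (UNIV :: 'v set) = (\<Sum>h\<in>{0..d}. dim (eigenspace_of scale A (th h)))"
  using dim_span_ranges_E[of "{0..d}"] by (simp add: span_ranges_E_UNIV)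

lemma A_span_ranges_Es:
  assumes "I \<subseteq> {0..d}"
    and neighbours: "\<And>j k. j \<in> I \<Longrightarrow> k \<le> d \<Longrightarrow> k \<le> j + 1 \<Longrightarrow> j \<le> k + 1 \<Longrightarrow> k \<in> J"
    and "x \<in> span_ranges scale Es I"
  shows "A x \<in> span_ranges scale Es J"
proof -
  have "A (Es j w) \<in> span_ranges scale Es J" if "j \<in> I" for j w
  proof -
    have "A (Es j w) = (\<Sum>k\<in>{0..d}. Es k (A (Es j w)))"
      using tridiagonal_system_space.sum_E[OF dual] by simp
    also have "\<dots> \<in> span_ranges scale Es J"
      unfolding span_ranges_def
    proof (rule span_sum)
      fix k assume k: "k \<in> {0..d}"
      show "Es k (A (Es j w)) \<in> span (\<Union>h\<in>J. range (Es h))"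
      proof (cases "k \<le> j + 1 \<and> j \<le> k + 1")
        case True
        with k that neighbours show ?thesis by (intro span_base) auto
      next
        case False
        with k that assms(1) show ?thesis
          using Es_A_Es_eq_0[of k j] by (auto simp: span_zero)
      qed
    qed
    finally show ?thesis .
  qed
  then have "A ` (\<Union>h\<in>I. range (Es h)) \<subseteq> span_ranges scale Es J"
    by blast
  from linear_span_into_subspace[OF linear_A this subspace_span_ranges] assms(3)
  show ?thesis
    by (simp add: span_ranges_def)
qed

lemma A_minus_eigenvalue_span_ranges_E:
  assumes "I \<subseteq> {0..d}" "x \<in> span_ranges scale E I"
  shows "A x - th i *s x \<in> span_ranges scale E (I - {i})"
proof -
  have "A v - th i *s v \<in> span_ranges scale E (I - {i})" if "h \<in> I" "v \<in> range (E h)" for h v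
  proof -
    have "h \<le> d"
      using that(1) assms(1) by auto
    with that(2) have "A v = th h *s v"
      using range_E by (auto simp: eigenspace_of_def)
    then have "A v - th i *s v = (th h - th i) *s v"
      by (simp add: scale_left_diff_distrib)
    with that show ?thesis
      unfolding span_ranges_def by (cases "h = i") (auto simp: span_zero intro: span_scale span_base)
  qed
  then have "(\<lambda>v. A v - th i *s v) ` (\<Union>h\<in>I. range (E h)) \<subseteq> span_ranges scale E (I - {i})"
    by blast
  from linear_span_into_subspace[OF linear_minus_scale[OF linear_A] this subspace_span_ranges] assms(2)
  show ?thesis
    by (simp add: span_ranges_def)
qed

abbreviation U :: "nat \<Rightarrow> 'v set" where "U \<equiv> split_component scale d E Es"

lemma subspace_split_component: "subspace (U i)"
  by (simp add: split_component_eq_span_ranges subspace_span_ranges subspace_inter)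

(* For i = d the conclusion reads A u = th d *s u: U (Suc d) is contained in the span of
   the empty family of ranges E h, h \<in> {Suc d..d}. *)
lemma A_split_component:
  assumes i: "i \<le> d" and u: "u \<in> U i"
  shows "A u - th i *s u \<in> U (Suc i)"
proof -
  have u_Es: "u \<in> span_ranges scale Es {0..i}" and u_E: "u \<in> span_ranges scale E {i..d}"
    using u by (simp_all add: split_component_eq_span_ranges)
  have "A u \<in> span_ranges scale Es {0..Suc i}"
    using i by (intro A_span_ranges_Es[OF _ _ u_Es]) auto
  moreover have "th i *s u \<in> span_ranges scale Es {0..Suc i}"
    using span_ranges_mono[of "{0..i}" "{0..Suc i}"] u_Es
    by (intro subspace_scale[OF subspace_span_ranges]) auto
  ultimately have "A u - th i *s u \<in> span_ranges scale Es {0..Suc i}"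
    by (rule subspace_diff[OF subspace_span_ranges])
  moreover have "A u - th i *s u \<in> span_ranges scale E ({i..d} - {i})"
    by (rule A_minus_eigenvalue_span_ranges_E[OF _ u_E]) auto
  moreover have "{i..d} - {i} = {Suc i..d}"
    by auto
  ultimately show ?thesis
    by (simp add: split_component_eq_span_ranges)
qed

lemma As_split_component:
  assumes i: "i \<le> d" and u: "u \<in> U i"
  shows "As u - ths i *s u \<in> U (i - 1)" and "i = 0 \<Longrightarrow> As u = ths i *s u"
proof -
  interpret dual: tridiagonal_system_space scale Basis d As Es ths A E th
    by (rule dual)
  have u_Es: "u \<in> span_ranges scale Es {0..i}" and u_E: "u \<in> span_ranges scale E {i..d}"
    using u by (simp_all add: split_component_eq_span_ranges)
  have "As u - ths i *s u \<in> span_ranges scale Es ({0..i} - {i})"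
    using i by (intro dual.A_minus_eigenvalue_span_ranges_E[OF _ u_Es]) auto
  moreover have "{0..i} - {i} = {0..<i}"
    by auto
  ultimately have low: "As u - ths i *s u \<in> span_ranges scale Es {0..<i}"
    by simp
  then show "i = 0 \<Longrightarrow> As u = ths i *s u"
    by (simp add: span_ranges_def)
  have "As u \<in> span_ranges scale E {i - 1..d}"
    using i by (intro dual.A_span_ranges_Es[OF _ _ u_E]) auto
  moreover have "ths i *s u \<in> span_ranges scale E {i - 1..d}"
    using span_ranges_mono[of "{i..d}" "{i - 1..d}"] u_E
    by (intro subspace_scale[OF subspace_span_ranges]) auto
  ultimately have "As u - ths i *s u \<in> span_ranges scale E {i - 1..d}"
    by (rule subspace_diff[OF subspace_span_ranges])
  moreover have "span_ranges scale Es {0..<i} \<subseteq> span_ranges scale Es {0..i - 1}"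
    by (rule span_ranges_mono) auto
  with low have "As u - ths i *s u \<in> span_ranges scale Es {0..i - 1}"
    by blast
  ultimately show "As u - ths i *s u \<in> U (i - 1)"
    by (simp add: split_component_eq_span_ranges)
qed

lemma span_split_components: "span (\<Union>i\<in>{0..d}. U i) = UNIV"
proof -
  let ?W = "span (\<Union>i\<in>{0..d}. U i)"
  have U_le: "U i \<subseteq> ?W" if "i \<le> d" for i
  proof -
    have "U i \<subseteq> (\<Union>i\<in>{0..d}. U i)"
      using that by auto
    then show ?thesis
      by (rule order_trans[OF _ span_superset])
  qed
  have "U (Suc d) = {0}"
    by (auto simp: split_component_eq_span_ranges span_ranges_def span_zero)
  then have A_step: "A u - th i *s u \<in> ?W" if "i \<le> d" "u \<in> U i" for i u
    using A_split_component[OF that] U_le[of "Suc i"] that(1) span_zero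
    by (cases "i = d") auto
  have As_step: "As u - ths i *s u \<in> ?W" if "i \<le> d" "u \<in> U i" for i u
    using As_split_component(1)[OF that] U_le[of "i - 1"] that(1)
    by (meson diff_le_self le_trans subsetD)
  have A_inv: "A ` ?W \<subseteq> ?W"
    using A_step by (intro span_invariant_if_shifts_in_span[OF linear_A]) auto
  have As_inv: "As ` ?W \<subseteq> ?W"
    using As_step by (intro span_invariant_if_shifts_in_span[OF linear_As]) auto
  obtain v where v: "v \<noteq> 0" "As v = ths 0 *s v"
    using eigenvalues_As by (force simp: eigenvalues_of_def)
  then have "v \<in> span_ranges scale Es {0..0}"
    using tridiagonal_system_space.range_E[OF dual, of 0]
    by (auto simp: span_ranges_def eigenspace_of_def intro: span_base)
  then have "v \<in> U 0"
    using span_ranges_E_UNIV by (simp add: split_component_eq_span_ranges)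
  with v U_le[of 0] have "?W \<noteq> {0}"
    by auto
  with irreducible[OF subspace_span A_inv As_inv] show ?thesis
    by simp
qed

lemma dim_UNIV_split:
  assumes "i \<le> d"
  shows "dim (UNIV :: 'v set) = (\<Sum>h\<in>{0..<i}. dim (eigenspace_of scale A (th h)))
                               + (\<Sum>h\<in>{i..d}. dim (eigenspace_of scale A (th h)))"
proof -
  have "{0..d} = {0..<i} \<union> {i..d}"
    using assms by auto
  moreover have "{0..<i} \<inter> {i..d} = {}"
    by auto
  ultimately show ?thesis
    unfolding dim_UNIV_eq_sum by (simp add: sum.union_disjoint)
qed

lemma span_ranges_Es_E_UNIV:
  "span (span_ranges scale Es {0..<i} \<union> span_ranges scale E {i..d}) = UNIV"
proof -
  let ?S = "span_ranges scale Es {0..<i}" and ?T = "span_ranges scale E {i..d}"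
  have "(\<Union>j\<in>{0..d}. U j) \<subseteq> ?S \<union> ?T"
  proof
    fix x assume "x \<in> (\<Union>j\<in>{0..d}. U j)"
    then obtain j where x: "x \<in> U j"
      by blast
    show "x \<in> ?S \<union> ?T"
    proof (cases "j < i")
      case True
      then have "span_ranges scale Es {0..j} \<subseteq> ?S"
        by (intro span_ranges_mono) auto
      with x show ?thesis
        by (auto simp: split_component_eq_span_ranges)
    next
      case False
      then have "span_ranges scale E {j..d} \<subseteq> ?T"
        by (intro span_ranges_mono) auto
      with x show ?thesis
        by (auto simp: split_component_eq_span_ranges)
    qed
  qed
  then show ?thesis
    using span_mono span_split_components by blast
qed

lemma sum_dim_eigenspaces_le:
  assumes i: "i \<le> d"
  shows "(\<Sum>h\<in>{0..<i}. dim (eigenspace_of scale A (th h)))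
           \<le> (\<Sum>h\<in>{0..<i}. dim (eigenspace_of scale As (ths h)))"
proof -
  let ?S = "span_ranges scale Es {0..<i}" and ?T = "span_ranges scale E {i..d}"
  have "dim (UNIV :: 'v set) \<le> dim ?S + dim ?T"
    using dim_span_Un_le[OF subspace_span_ranges subspace_span_ranges, of Es "{0..<i}" E "{i..d}"]
    by (simp only: span_ranges_Es_E_UNIV)
  moreover have "dim ?S = (\<Sum>h\<in>{0..<i}. dim (eigenspace_of scale As (ths h)))"
    using i by (intro tridiagonal_system_space.dim_span_ranges_E[OF dual]) auto
  ultimately show ?thesis
    using dim_span_ranges_E[of "{i..d}"] dim_UNIV_split[OF i] by simp
qed

lemma sum_dim_eigenspaces_eq:
  "i \<le> d \<Longrightarrow> (\<Sum>h\<in>{0..<i}. dim (eigenspace_of scale A (th h)))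
                = (\<Sum>h\<in>{0..<i}. dim (eigenspace_of scale As (ths h)))"
  using sum_dim_eigenspaces_le tridiagonal_system_space.sum_dim_eigenspaces_le[OF dual]
  by (simp add: antisym)

lemma dim_eigenspace_As_le_split_component:
  assumes i: "i \<le> d"
  shows "dim (eigenspace_of scale As (ths i)) \<le> dim (U i)"
proof -
  let ?S = "span_ranges scale Es {0..i}" and ?T = "span_ranges scale E {i..d}"
  have "dim {x + y |x y. x \<in> ?S \<and> y \<in> ?T} + dim (U i) = dim ?S + dim ?T"
    using dim_sums_Int[OF subspace_span_ranges subspace_span_ranges, of Es "{0..i}" E "{i..d}"]
    by (simp add: split_component_eq_span_ranges)
  moreover have "dim {x + y |x y. x \<in> ?S \<and> y \<in> ?T} \<le> dim (UNIV :: 'v set)"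
    by (rule dim_subset) simp
  moreover have "dim ?S = (\<Sum>h\<in>{0..i}. dim (eigenspace_of scale As (ths h)))"
    using i by (intro tridiagonal_system_space.dim_span_ranges_E[OF dual]) auto
  moreover have "{0..i} = insert i {0..<i}"
    by auto
  ultimately show ?thesis
    using dim_span_ranges_E[of "{i..d}"] dim_UNIV_split[OF i] sum_dim_eigenspaces_eq[OF i]
    by simp
qed

(* The U i are the eigenspaces of K; this is all that makes their sum direct. *)
context
  fixes K :: "'v \<Rightarrow> 'v"
  assumes linear_K: "Vector_Spaces.linear scale scale K"
    and K_split_component: "\<And>i v. i \<le> d \<Longrightarrow> v \<in> U i \<Longrightarrow> K v = ths i *s v"
begin

lemma K_scalar_blocks: "j \<in> {0..d} \<Longrightarrow> v \<in> U j \<Longrightarrow> K v = ths j *s v"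
  using K_split_component by simp

lemma eigenspace_K: "i \<le> d \<Longrightarrow> eigenspace_of scale K (ths i) = U i"
  by (rule scalar_blocks_eigenspace_of[OF linear_K _ subspace_split_component
        span_split_components K_scalar_blocks inj_ths]) auto

lemma dim_split_component:
  assumes "i \<le> d"
  shows "dim (U i) = dim (eigenspace_of scale As (ths i))"
proof -
  have "(\<Sum>j\<in>{0..d}. dim (U j)) = (\<Sum>j\<in>{0..d}. dim (eigenspace_of scale K (ths j)))"
    using eigenspace_K by simp
  also have "\<dots> = dim (span (\<Union>j\<in>{0..d}. eigenspace_of scale K (ths j)))"
    using dim_span_eigenspaces[OF linear_K _ inj_ths] by simp
  also have "\<dots> = (\<Sum>j\<in>{0..d}. dim (eigenspace_of scale As (ths j)))"
    using eigenspace_K span_split_components tridiagonal_system_space.dim_UNIV_eq_sum[OF dual]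
    by simp
  finally have "(\<Sum>j\<in>{0..d}. dim (eigenspace_of scale As (ths j))) = (\<Sum>j\<in>{0..d}. dim (U j))"
    by simp
  then have "dim (eigenspace_of scale As (ths i)) = dim (U i)"
    by (rule sum_mono_inv) (use assms dim_eigenspace_As_le_split_component in auto)
  then show ?thesis
    by simp
qed

lemma split_component_nonzero:
  assumes "i \<le> d"
  shows "U i \<noteq> {0}"
proof
  assume "U i = {0}"
  then have "dim (eigenspace_of scale As (ths i)) = 0"
    using dim_split_component[OF assms] by simp
  moreover obtain v where "v \<noteq> 0" "As v = ths i *s v"
    using eigenvalues_As assms by (force simp: eigenvalues_of_def)
  ultimately show False
    by (auto simp: eigenspace_of_def)
qed

interpretation endo: finite_dimensional_vector_space_pair_1 scale Basis scale ..

lemma eigen_rescale_split_component: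
  "j \<le> d \<Longrightarrow> u \<in> U j \<Longrightarrow> eigen_rescale scale K ths d g u = g j *s u"
  using K_split_component by (intro eigen_rescale_eigenvector[OF linear_K inj_ths])

lemma bij_eigen_rescale:
  assumes "\<And>i. i \<le> d \<Longrightarrow> g i \<noteq> 0"
  shows "bij (eigen_rescale scale K ths d g)"
proof -
  let ?R = "eigen_rescale scale K ths d"
  have lin: "Vector_Spaces.linear scale scale (?R g \<circ> ?R (\<lambda>i. inverse (g i)))"
    by (rule Vector_Spaces.linear_compose[OF linear_eigen_rescale linear_eigen_rescale, OF linear_K linear_K])
  have "(?R g \<circ> ?R (\<lambda>i. inverse (g i))) v = v" for v
  proof (rule endo.linear_eq_on[OF lin linear_ident])
    show "v \<in> span (\<Union>j\<in>{0..d}. U j)"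
      using span_split_components by simp
  next
    fix u assume "u \<in> (\<Union>j\<in>{0..d}. U j)"
    then obtain j where j: "j \<le> d" "u \<in> U j"
      by auto
    then have "inverse (g j) *s u \<in> U j"
      using subspace_scale[OF subspace_split_component] by blast
    with j assms show "(?R g \<circ> ?R (\<lambda>i. inverse (g i))) u = u"
      by (simp add: eigen_rescale_split_component)
  qed
  then have "surj (?R g)"
    by (metis comp_apply surjI)
  with linear_surj_imp_inj[OF linear_eigen_rescale[OF linear_K]] show ?thesis
    by (simp add: bij_def)
qed

lemma linear_mixture: "Vector_Spaces.linear scale scale (\<lambda>v. t *s As v + (1 - t) *s K v)"
  by (intro endo.linear_compose_add endo.linear_compose_scale_right linear_As linear_K)

lemma diagonalizable_K: "diagonalizable_op scale K"
  by (rule scalar_blocks_diagonalizable_op[OF linear_K _ subspace_split_component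
        span_split_components K_scalar_blocks inj_ths]) auto

lemma eigenvalues_K: "eigenvalues_of scale K = ths ` {0..d}"
  by (rule scalar_blocks_eigenvalues_of[OF linear_K _ subspace_split_component
        span_split_components K_scalar_blocks inj_ths]) (auto simp: split_component_nonzero)

lemma mixture_intertwines_on_split_component:
  assumes t: "t \<noteq> 0" and j: "j \<le> d" "u \<in> U j"
  defines "D \<equiv> eigen_rescale scale K ths d (\<lambda>i. inverse t ^ i)"
  shows "t *s As (D u) + (1 - t) *s K (D u) = D (As u)"
proof -
  interpret As: Vector_Spaces.linear scale scale As by (rule linear_As)
  interpret K: Vector_Spaces.linear scale scale K by (rule linear_K)
  interpret D: Vector_Spaces.linear scale scale D
    unfolding D_def by (rule linear_eigen_rescale[OF linear_K])
  have D_split_component: "D v = inverse t ^ i *s v" if "i \<le> d" "v \<in> U i" for i v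
    using that by (simp add: D_def eigen_rescale_split_component)
  define w where "w = As u - ths j *s u"
  have "t *s As (D u) + (1 - t) *s K (D u) = inverse t ^ j *s (ths j *s u + t *s w)"
    using j by (simp add: D_split_component As.scale K.scale K_split_component w_def algebra_simps)
  also have "\<dots> = (inverse t ^ j * ths j) *s u + (inverse t ^ j * t) *s w"
    by (simp add: scale_right_distrib)
  also have "\<dots> = D (As u)"
  proof (cases j)
    case 0
    then have "w = 0"
      using As_split_component(2)[OF j] by (simp add: w_def)
    with j show ?thesis
      by (simp add: D_split_component D.scale w_def mult.commute)
  next
    case (Suc k)
    then have "w \<in> U k"
      using As_split_component(1)[OF j] by (simp add: w_def)
    moreover have "inverse t ^ j * t = inverse t ^ k"
      using Suc t by (simp add: field_simps)
    ultimately have "D w = (inverse t ^ j * t) *s w"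
      using D_split_component[of k w] Suc j by simp
    moreover have "As u = ths j *s u + w"
      by (simp add: w_def)
    ultimately show ?thesis
      using j by (simp add: D_split_component D.add D.scale mult.commute)
  qed
  finally show ?thesis .
qed

lemma mixture_similar_As:
  assumes t: "t \<noteq> 0"
  obtains D where "Vector_Spaces.linear scale scale D" "bij D"
    and "\<And>v. t *s As (D v) + (1 - t) *s K (D v) = D (As v)"
proof
  let ?D = "eigen_rescale scale K ths d (\<lambda>i. inverse t ^ i)"
  show lin_D: "Vector_Spaces.linear scale scale ?D"
    by (rule linear_eigen_rescale[OF linear_K])
  show "bij ?D"
    using t by (intro bij_eigen_rescale) simp
  fix v
  have "((\<lambda>v. t *s As v + (1 - t) *s K v) \<circ> ?D) v = (?D \<circ> As) v"
  proof (rule endo.linear_eq_on[OF Vector_Spaces.linear_compose[OF lin_D linear_mixture]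
        Vector_Spaces.linear_compose[OF linear_As lin_D]])
    show "v \<in> span (\<Union>j\<in>{0..d}. U j)"
      using span_split_components by simp
  next
    fix u assume "u \<in> (\<Union>j\<in>{0..d}. U j)"
    then show "((\<lambda>v. t *s As v + (1 - t) *s K v) \<circ> ?D) u = (?D \<circ> As) u"
      using mixture_intertwines_on_split_component[OF t] by auto
  qed
  then show "t *s As (?D v) + (1 - t) *s K (?D v) = ?D (As v)"
    by simp
qed

lemma mixture_spectrum:
  fixes t :: 'a
  defines "B \<equiv> \<lambda>v. t *s As v + (1 - t) *s K v"
  shows "diagonalizable_op scale B \<and> eigenvalues_of scale B = ths ` {0..d}
           \<and> (\<forall>i\<le>d. dim (eigenspace_of scale B (ths i)) = dim (U i))"
proof (cases "t = 0")
  case True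
  then have "B = K"
    by (simp add: B_def)
  then show ?thesis
    using diagonalizable_K eigenvalues_K eigenspace_K by simp
next
  case False
  then obtain D where lin_D: "Vector_Spaces.linear scale scale D" and "bij D"
    and "\<And>v. t *s As (D v) + (1 - t) *s K (D v) = D (As v)"
    by (rule mixture_similar_As) blast
  then have intertwines: "\<And>v. B (D v) = D (As v)"
    by (simp add: B_def)
  have lin_B: "Vector_Spaces.linear scale scale B"
    unfolding B_def by (rule linear_mixture)
  note intertwined = intertwined_eigenspace_of[of B D As, OF lin_B lin_D \<open>bij D\<close> intertwines]
    intertwined_eigenvalues_of[of B D As, OF lin_B lin_D \<open>bij D\<close> intertwines]
    intertwined_diagonalizable_op[of B D As, OF lin_B lin_D \<open>bij D\<close> intertwines diagonalizable_As]
  have "dim (eigenspace_of scale B (ths i)) = dim (U i)" if "i \<le> d" for i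
  proof -
    have "inj D"
      using \<open>bij D\<close> by (simp add: bij_def)
    then have "dim (D ` eigenspace_of scale As (ths i)) = dim (eigenspace_of scale As (ths i))"
      using endo.dim_image_eq[OF lin_D] by (simp add: inj_on_subset)
    then show ?thesis
      using dim_split_component[OF that] by (simp add: intertwined(1))
  qed
  with intertwined(2,3) eigenvalues_As show ?thesis
    by simp
qed

end

end

theorem lemma7p6:
  fixes s :: "'a::alg_closed_field \<Rightarrow> 'v::ab_group_add \<Rightarrow> 'v"
    and Basis :: "'v set"
    and q t :: 'a and d :: nat
    and A As K :: "'v \<Rightarrow> 'v" and E Es :: "nat \<Rightarrow> 'v \<Rightarrow> 'v"
  assumes fdvs: "finite_dimensional_vector_space s Basis"
    and V_nonzero: "(UNIV :: 'v set) \<noteq> {0}"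
    and q_nz: "q \<noteq> 0"
    and q_not_root: "\<forall>n::nat. n > 0 \<longrightarrow> q ^ n \<noteq> 1"
    and d_ge: "d \<ge> 1"
    and TDS: "tridiagonal_system s d A E (\<lambda>i. q powi (2 * int i - int d))
                                    As Es (\<lambda>i. q powi (int d - 2 * int i))"
    and serre: "q_serre s q A As"
    and K_lin: "Vector_Spaces.linear s s K"
    and K_act: "\<forall>i\<le>d. \<forall>v\<in>split_component s d E Es i. K v = s (q powi (int d - 2 * int i)) v"
  shows "diagonalizable_op s (\<lambda>v. s t (As v) + s (1 - t) (K v))
     \<and> eigenvalues_of s (\<lambda>v. s t (As v) + s (1 - t) (K v)) = (\<lambda>i. q powi (int d - 2 * int i)) ` {0..d}
     \<and> (\<forall>i\<le>d. vector_space.dim s (eigenspace_of s (\<lambda>v. s t (As v) + s (1 - t) (K v)) (q powi (int d - 2 * int i)))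
               = vector_space.dim s (split_component s d E Es i))"
proof -
  interpret tridiagonal_system_space s Basis d A E "\<lambda>i. q powi (2 * int i - int d)"
      As Es "\<lambda>i. q powi (int d - 2 * int i)"
    by (intro tridiagonal_system_space.intro tridiagonal_system_space_axioms.intro fdvs TDS)
  show ?thesis
    by (rule mixture_spectrum[OF K_lin K_act[rule_format]])
qed

end
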